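(* Assume (A1)–(A2) below hold uniformly for all edges. Let $\boldsymbol u=(\rho,w)$ and $\hat{\boldsymbol u}=(\hat\rho,\hat w)$ be classical network solutions on $[0,T]$ with parameters and data $(\varepsilon,\gamma,h_\partial)$ and $(\hat\varepsilon,\hat\gamma,\hat h_\partial)$ respectively, and assume $(\hat\rho,\hat w)$ is Lipschitz on every edge. For each edge let $h^e(\tilde\rho,\tilde w)=\varepsilon^2\tilde w^2/2+P'(\tilde\rho)+gz^e$ and $m^e(\tilde\rho,\tilde w)=a^e\tilde\rho\tilde w$ (the co-state maps with the unperturbed parameter $\varepsilon$). Then at every time $$-\sum_{v\in\mathcal{V}}\sum_{e\in\mathcal{E}(v)}\big(h^e(\rho^e,w^e)-h^e(\hat\rho^e,\hat w^e)\big)(v)\,\big(m^e(\rho^e,w^e)-m^e(\hat\rho^e,\hat w^e)\big)(v)\,n^e(v)\le\hat C_\partial\big(|h_\partial-\hat h_\partial|+|\varepsilon^2-\hat\varepsilon^2|\big),$$ where $|h_\partial-\hat h_\partial|^2=\sum_{v\in\mathcal{V}_\partial}|h^v_\partial-\hat h^v_\partial|^2$ and $\hat C_\partial$ depends only on the bounds in (A1)–(A2) and the Lipschitz bounds of $(\hat\rho,\hat w)$.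
   Context: Let $(\mathcal{V},\mathcal{E})$ be a finite, connected, directed graph, each edge $e$ identified with $(0,\ell^e)$; $\mathcal{E}(v)$ the edges incident to $v$; $\mathcal{V}_0=\{v:|\mathcal{E}(v)|>1\}$, $\mathcal{V}_\partial=\{v:|\mathcal{E}(v)|=1\}$; $n^e(v)=1$ if $v$ is the end point ($x=\ell^e$) of $e$, $n^e(v)=-1$ if $v$ is its start point ($x=0$). Edge data: cross sections $a^e$, elevations $z^e$, friction coefficients $\gamma^e>0$; $g$ constant; $P:(0,\infty)\to\mathbb{R}$ smooth strictly convex. For parameter $\varepsilon\ge0$ the network problem reads on each edge $a^e\partial_\tau\rho^e+\partial_xm^e=0$, $\varepsilon^2\partial_\tau w^e+\partial_xh^e+\gamma^e|w^e|w^e=0$, $h^e=\varepsilon^2|w^e|^2/2+P'(\rho^e)+gz^e$, $m^e=a^e\rho^ew^e$; at $v\in\mathcal{V}_0$: $\sum_{e\in\mathcal{E}(v)}m^e(v)n^e(v)=0$ and $h^e(v)=h^v$ for all $e\in\mathcal{E}(v)$ (a common value); at $v\in\mathcal{V}_\partial$: $h^e(v)=h^v_\partial$. The perturbed solution uses $\hat\varepsilon$, $\hat\gamma^e$, $\hat h_\partial$ and its own enthalpy $\hat h^e=\hat\varepsilon^2|\hat w^e|^2/2+P'(\hat\rho^e)+gz^e$ in these conditions. (A1) (each edge): positive constants $\underline\rho\le\bar\rho$, $\bar w$, $\bar\varepsilon$ with $\rho P''(\rho)\ge4\bar\varepsilon^2\bar w^2$ for $\underline\rho\le\rho\le\bar\rho$;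 $0<\underline a\le a^e\le\bar a$; $|gz^e|\le\bar g\bar z$. (A2): $0\le\varepsilon,\hat\varepsilon\le\bar\varepsilon$, $0<\underline\gamma\le\gamma^e,\hat\gamma^e\le\bar\gamma$, solutions satisfy $\underline\rho\le\rho^e\le\bar\rho$, $-\bar w\le w^e\le\bar w$. A classical network solution on $[0,T]$: per edge $(\rho^e,w^e)\in C^1([0,T];L^2(0,\ell^e)^2)$ satisfying the bounds, $(h^e,m^e)\in C^0([0,T];H^1(0,\ell^e)^2)$, the edge equations holding weakly ($(a^e\partial_\tau\rho^e,q)+(\partial_xm^e,q)=0$, $(\varepsilon^2\partial_\tau w^e,r)-(h^e,\partial_xr)+(\gamma^e|w^e|w^e,r)=-[h^er]_0^{\ell^e}$ for all $q,r\in H^1(0,\ell^e)$), and the coupling and boundary conditions holding for all times. *)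

theory Defs
  imports "HOL-Analysis.Analysis"
begin

definition edges_at :: "'e set \<Rightarrow> ('e \<Rightarrow> 'v) \<Rightarrow> ('e \<Rightarrow> 'v) \<Rightarrow> 'v \<Rightarrow> 'e set" where
  "edges_at E src tgt v = {e \<in> E. src e = v \<or> tgt e = v}"

definition inner_vertices :: "'v set \<Rightarrow> 'e set \<Rightarrow> ('e \<Rightarrow> 'v) \<Rightarrow> ('e \<Rightarrow> 'v) \<Rightarrow> 'v set" where
  "inner_vertices V E src tgt = {v \<in> V. card (edges_at E src tgt v) > 1}"

definition boundary_vertices :: "'v set \<Rightarrow> 'e set \<Rightarrow> ('e \<Rightarrow> 'v) \<Rightarrow> ('e \<Rightarrow> 'v) \<Rightarrow> 'v set" where
  "boundary_vertices V E src tgt = {v \<in> V. card (edges_at E src tgt v) = 1}"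

definition nsign :: "('e \<Rightarrow> 'v) \<Rightarrow> ('e \<Rightarrow> 'v) \<Rightarrow> 'v \<Rightarrow> 'e \<Rightarrow> real" where
  "nsign src tgt v e = (if tgt e = v then 1 else if src e = v then -1 else 0)"

text \<open>Position on edge e (identified with (0, l e)) of the vertex v.\<close>
definition vpos :: "('e \<Rightarrow> 'v) \<Rightarrow> ('e \<Rightarrow> real) \<Rightarrow> 'v \<Rightarrow> 'e \<Rightarrow> real" where
  "vpos tgt l v e = (if tgt e = v then l e else 0)"

definition network_graph ::
  "'v set \<Rightarrow> 'e set \<Rightarrow> ('e \<Rightarrow> 'v) \<Rightarrow> ('e \<Rightarrow> 'v) \<Rightarrow> ('e \<Rightarrow> real) \<Rightarrow> bool" where
  "network_graph V E src tgt l \<longleftrightarrow>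
     finite V \<and> finite E \<and>
     (\<forall>e\<in>E. src e \<in> V \<and> tgt e \<in> V \<and> src e \<noteq> tgt e \<and> 0 < l e) \<and>
     (\<forall>u\<in>V. \<forall>v\<in>V. (u, v) \<in> ({(src e, tgt e) | e. e \<in> E} \<union> {(tgt e, src e) | e. e \<in> E})\<^sup>*)"

definition L2_on :: "real \<Rightarrow> (real \<Rightarrow> real) \<Rightarrow> bool" where
  "L2_on l f \<longleftrightarrow> f \<in> borel_measurable (lebesgue_on {0..l}) \<and> (\<lambda>x. (f x)\<^sup>2) integrable_on {0..l}"

definition L2norm :: "real \<Rightarrow> (real \<Rightarrow> real) \<Rightarrow> real" where
  "L2norm l f = sqrt (integral {0..l} (\<lambda>x. (f x)\<^sup>2))"

text \<open>f is in H^1(0,l) with weak derivative df (f taken as its continuous representative).\<close>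
definition H1_on :: "real \<Rightarrow> (real \<Rightarrow> real) \<Rightarrow> (real \<Rightarrow> real) \<Rightarrow> bool" where
  "H1_on l f df \<longleftrightarrow> L2_on l f \<and> L2_on l df \<and> df integrable_on {0..l} \<and>
     (\<forall>x\<in>{0..l}. f x = f 0 + integral {0..x} df)"

text \<open>u in C^1([0,T]; L^2(0,l)) with time derivative du.\<close>
definition C1_L2 :: "real \<Rightarrow> real \<Rightarrow> (real \<Rightarrow> real \<Rightarrow> real) \<Rightarrow> (real \<Rightarrow> real \<Rightarrow> real) \<Rightarrow> bool" where
  "C1_L2 T l u du \<longleftrightarrow>
     (\<forall>t\<in>{0..T}. L2_on l (u t) \<and> L2_on l (du t)) \<and>
     (\<forall>t\<in>{0..T}. ((\<lambda>s. L2norm l (\<lambda>x. (u s x - u t x) / (s - t) - du t x)) \<longlongrightarrow> 0) (at t within {0..T})) \<and>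
     (\<forall>t\<in>{0..T}. ((\<lambda>s. L2norm l (\<lambda>x. du s x - du t x)) \<longlongrightarrow> 0) (at t within {0..T}))"

text \<open>f in C^0([0,T]; H^1(0,l)) with spatial weak derivative df.\<close>
definition C0_H1 :: "real \<Rightarrow> real \<Rightarrow> (real \<Rightarrow> real \<Rightarrow> real) \<Rightarrow> (real \<Rightarrow> real \<Rightarrow> real) \<Rightarrow> bool" where
  "C0_H1 T l f df \<longleftrightarrow>
     (\<forall>t\<in>{0..T}. H1_on l (f t) (df t)) \<and>
     (\<forall>t\<in>{0..T}. ((\<lambda>s. L2norm l (\<lambda>x. f s x - f t x) + L2norm l (\<lambda>x. df s x - df t x)) \<longlongrightarrow> 0)
        (at t within {0..T}))"

definition smooth_strictly_convex :: "(real \<Rightarrow> real) \<Rightarrow> bool" where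
  "smooth_strictly_convex P \<longleftrightarrow>
     (\<forall>n. \<forall>x>0. ((deriv ^^ n) P) differentiable (at x)) \<and>
     (\<forall>x>0. \<forall>y>0. \<forall>u. 0 < u \<and> u < 1 \<and> x \<noteq> y \<longrightarrow>
        P (u * x + (1 - u) * y) < u * P x + (1 - u) * P y)"

definition enthalpy :: "real \<Rightarrow> (real \<Rightarrow> real) \<Rightarrow> real \<Rightarrow> real \<Rightarrow> real \<Rightarrow> real \<Rightarrow> real" where
  "enthalpy eps P g zx r v = eps\<^sup>2 * v\<^sup>2 / 2 + deriv P r + g * zx"

definition massflux :: "real \<Rightarrow> real \<Rightarrow> real \<Rightarrow> real" where
  "massflux a r v = a * r * v"

definition classical_network_solution ::
  "'v set \<Rightarrow> 'e set \<Rightarrow> ('e \<Rightarrow> 'v) \<Rightarrow> ('e \<Rightarrow> 'v) \<Rightarrow> ('e \<Rightarrow> real) \<Rightarrow>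
   ('e \<Rightarrow> real) \<Rightarrow> ('e \<Rightarrow> real \<Rightarrow> real) \<Rightarrow> real \<Rightarrow> (real \<Rightarrow> real) \<Rightarrow>
   real \<Rightarrow> ('e \<Rightarrow> real) \<Rightarrow> ('v \<Rightarrow> real) \<Rightarrow> real \<Rightarrow> real \<Rightarrow> real \<Rightarrow> real \<Rightarrow>
   ('e \<Rightarrow> real \<Rightarrow> real \<Rightarrow> real) \<Rightarrow> ('e \<Rightarrow> real \<Rightarrow> real \<Rightarrow> real) \<Rightarrow> bool" where
  "classical_network_solution V E src tgt l a z g P eps gam hb rlo rhi wbar T rho w \<longleftrightarrow>
    (let H = (\<lambda>e t x. enthalpy eps P g (z e x) (rho e t x) (w e t x));
         M = (\<lambda>e t x. massflux (a e) (rho e t x) (w e t x)) in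
    (\<exists>rt wt dH dM.
      (\<forall>e\<in>E.
        C1_L2 T (l e) (rho e) (rt e) \<and> C1_L2 T (l e) (w e) (wt e) \<and>
        (\<forall>t\<in>{0..T}. AE x in lebesgue_on {0..l e}.
            rlo \<le> rho e t x \<and> rho e t x \<le> rhi \<and> - wbar \<le> w e t x \<and> w e t x \<le> wbar) \<and>
        C0_H1 T (l e) (H e) (dH e) \<and> C0_H1 T (l e) (M e) (dM e) \<and>
        (\<forall>t\<in>{0..T}. \<forall>q dq. H1_on (l e) q dq \<longrightarrow>
           integral {0..l e} (\<lambda>x. a e * rt e t x * q x) + integral {0..l e} (\<lambda>x. dM e t x * q x) = 0) \<and>
        (\<forall>t\<in>{0..T}. \<forall>r dr. H1_on (l e) r dr \<longrightarrow>
           integral {0..l e} (\<lambda>x. eps\<^sup>2 * wt e t x * r x)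
           - integral {0..l e} (\<lambda>x. H e t x * dr x)
           + integral {0..l e} (\<lambda>x. gam e * \<bar>w e t x\<bar> * w e t x * r x)
           = - (H e t (l e) * r (l e) - H e t 0 * r 0))) \<and>
      (\<forall>t\<in>{0..T}. \<forall>v\<in>inner_vertices V E src tgt.
         (\<Sum>e\<in>edges_at E src tgt v. M e t (vpos tgt l v e) * nsign src tgt v e) = 0 \<and>
         (\<exists>hv. \<forall>e\<in>edges_at E src tgt v. H e t (vpos tgt l v e) = hv)) \<and>
      (\<forall>t\<in>{0..T}. \<forall>v\<in>boundary_vertices V E src tgt.
         \<forall>e\<in>edges_at E src tgt v. H e t (vpos tgt l v e) = hb v)))"

end

theory Submission
  imports Defs
begin

text \<open>
  At an inner vertex both solutions have a common enthalpy on all incident edges and satisfy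
  Kirchhoff's law, so the vertex sum of \<open>(h - \<hat>h) (m - \<hat>m) n\<close> vanishes; at a boundary vertex the
  enthalpies are the boundary data, so the term is bounded by \<open>|h\<^sub>\<partial> - \<hat>h\<^sub>\<partial>|\<close> times a bound on the
  mass fluxes. The only defect is that \<open>\<hat>h\<close> in the statement is evaluated with \<open>\<epsilon>\<close> instead
  of \<open>\<hat>\<epsilon>\<close>, which shifts it by \<open>(\<epsilon>\<^sup>2 - \<hat>\<epsilon>\<^sup>2) \<hat>w\<^sup>2 / 2\<close>. The pointwise bounds at the vertices
  needed for this follow from the almost-everywhere bounds, since mass fluxes lie in \<open>H\<^sup>1\<close> and
  \<open>\<hat>w\<close> is Lipschitz, hence both are continuous.
\<close>

lemma continuous_on_AE_mem_closed:
  fixes f :: "real \<Rightarrow> real"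
  assumes "a < b" and "continuous_on {a..b} f" and "closed C"
    and "AE x in lebesgue_on {a..b}. f x \<in> C" and "x \<in> {a..b}"
  shows "f x \<in> C"
proof -
  have closed_pre: "closed ({a..b} \<inter> f -` C)"
    using continuous_closed_preimage[OF assms(2) closed_atLeastAtMost assms(3)] .
  have "AE y in lebesgue. y \<in> {a..b} \<longrightarrow> f y \<in> C"
    using assms(4) by (subst (asm) AE_restrict_space_iff) auto
  then have "AE y \<in> {a<..<b} in lebesgue. y \<in> {a..b} \<inter> f -` C"
    by eventually_elim auto
  then have "{a<..<b} \<subseteq> {a..b} \<inter> f -` C"
    using mem_closed_if_AE_lebesgue_open[OF open_greaterThanLessThan closed_pre] by blast
  then have "closure {a<..<b} \<subseteq> {a..b} \<inter> f -` C"
    using closed_pre closure_minimal by blast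
  with assms(1,5) show ?thesis by auto
qed

lemma H1_on_continuous_on:
  assumes "H1_on l f df"
  shows "continuous_on {0..l} f"
proof -
  have int: "df integrable_on {0..l}"
    using assms by (simp add: H1_on_def)
  have f_eq: "f 0 + integral {0..x} df = f x" if "x \<in> {0..l}" for x
    using assms that unfolding H1_on_def by metis
  have "continuous_on {0..l} (\<lambda>x. f 0 + integral {0..x} df)"
    by (intro continuous_on_add continuous_on_const indefinite_integral_continuous_1[OF int])
  then show ?thesis
    by (rule continuous_on_eq) (rule f_eq)
qed

lemma lipschitz_on_slice_continuous_on:
  assumes "L-lipschitz_on (S \<times> X) (\<lambda>(t, x). w t x)" and "t \<in> S"
  shows "continuous_on X (w t)"
proof -
  have "continuous_on X ((\<lambda>(t, x). w t x) \<circ> Pair t)"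
    by (rule continuous_on_compose[OF continuous_on_Pair[OF continuous_on_const continuous_on_id]
          continuous_on_subset[OF lipschitz_on_continuous_on[OF assms(1)]]])
      (use assms(2) in auto)
  then show ?thesis by (simp add: o_def)
qed

lemma network_graph_finite:
  assumes "network_graph V E src tgt l"
  shows "finite V" and "finite E"
  using assms by (simp_all add: network_graph_def)

lemma vpos_mem_edge:
  assumes "network_graph V E src tgt l" and "e \<in> E"
  shows "vpos tgt l v e \<in> {0..l e}"
  using assms by (auto simp: network_graph_def vpos_def)

lemma abs_nsign_le_1: "\<bar>nsign src tgt v e\<bar> \<le> 1"
  by (simp add: nsign_def)

lemma enthalpy_change_eps:
  "enthalpy eps P g zx r v = enthalpy eps' P g zx r v + (eps\<^sup>2 - eps'\<^sup>2) * v\<^sup>2 / 2"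
  by (simp add: enthalpy_def field_simps)

lemma abs_le_sqrt_sum_squares:
  fixes f :: "'a \<Rightarrow> real"
  assumes "finite B" and "v \<in> B"
  shows "\<bar>f v\<bar> \<le> sqrt (\<Sum>u\<in>B. (f u)\<^sup>2)"
  using member_le_L2_set[OF assms, of "\<lambda>u. \<bar>f u\<bar>"] by (simp add: L2_set_def)

lemma abs_enthalpy_shift_le:
  fixes v wbar :: real
  assumes "\<bar>v\<bar> \<le> wbar"
  shows "\<bar>(eps\<^sup>2 - eps'\<^sup>2) * v\<^sup>2 / 2\<bar> \<le> \<bar>eps\<^sup>2 - eps'\<^sup>2\<bar> * wbar\<^sup>2 / 2"
proof -
  have "v\<^sup>2 \<le> wbar\<^sup>2"
    using assms by (metis abs_ge_zero power2_abs power_mono)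
  then show ?thesis
    by (simp add: abs_mult mult_left_mono)
qed

lemma abs_massflux_le:
  assumes "0 \<le> a" "a \<le> ahi" "0 \<le> r" "r \<le> rhi" "\<bar>v\<bar> \<le> wbar"
  shows "\<bar>massflux a r v\<bar> \<le> ahi * rhi * wbar"
proof -
  have "\<bar>massflux a r v\<bar> = a * r * \<bar>v\<bar>"
    using assms by (simp add: massflux_def abs_mult)
  also have "\<dots> \<le> ahi * rhi * wbar"
    using assms by (intro mult_mono) auto
  finally show ?thesis .
qed

lemma classical_network_solution_inner_vertex:
  assumes "classical_network_solution V E src tgt l a z g P eps gam hb rlo rhi wbar T rho w"
    and "t \<in> {0..T}" and "v \<in> inner_vertices V E src tgt"
  shows "(\<Sum>e\<in>edges_at E src tgt v.
           massflux (a e) (rho e t (vpos tgt l v e)) (w e t (vpos tgt l v e)) * nsign src tgt v e) = 0"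
    and "\<exists>hv. \<forall>e\<in>edges_at E src tgt v.
           enthalpy eps P g (z e (vpos tgt l v e)) (rho e t (vpos tgt l v e)) (w e t (vpos tgt l v e)) = hv"
  using assms unfolding classical_network_solution_def Let_def by blast+

lemma classical_network_solution_boundary_vertex:
  assumes "classical_network_solution V E src tgt l a z g P eps gam hb rlo rhi wbar T rho w"
    and "t \<in> {0..T}" and "v \<in> boundary_vertices V E src tgt" and "e \<in> edges_at E src tgt v"
  shows "enthalpy eps P g (z e (vpos tgt l v e)) (rho e t (vpos tgt l v e)) (w e t (vpos tgt l v e)) = hb v"
  using assms unfolding classical_network_solution_def Let_def by blast

lemma classical_network_solution_AE_bounds:
  assumes "classical_network_solution V E src tgt l a z g P eps gam hb rlo rhi wbar T rho w"
    and "t \<in> {0..T}" and "e \<in> E"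
  shows "AE x in lebesgue_on {0..l e}.
           rlo \<le> rho e t x \<and> rho e t x \<le> rhi \<and> - wbar \<le> w e t x \<and> w e t x \<le> wbar"
  using assms unfolding classical_network_solution_def Let_def by blast

lemma classical_network_solution_massflux_H1:
  assumes "classical_network_solution V E src tgt l a z g P eps gam hb rlo rhi wbar T rho w"
    and "t \<in> {0..T}" and "e \<in> E"
  obtains dM where "H1_on (l e) (\<lambda>x. massflux (a e) (rho e t x) (w e t x)) dM"
  using assms unfolding classical_network_solution_def Let_def C0_H1_def by blast

lemma classical_network_solution_abs_massflux_le:
  assumes sol: "classical_network_solution V E src tgt l a z g P eps gam hb rlo rhi wbar T rho w"
    and graph: "network_graph V E src tgt l"
    and "0 \<le> a e" "a e \<le> ahi" "0 \<le> rlo"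
    and t: "t \<in> {0..T}" and e: "e \<in> E" and x: "x \<in> {0..l e}"
  shows "\<bar>massflux (a e) (rho e t x) (w e t x)\<bar> \<le> ahi * rhi * wbar"
proof -
  obtain dM where "H1_on (l e) (\<lambda>x. massflux (a e) (rho e t x) (w e t x)) dM"
    using classical_network_solution_massflux_H1[OF sol t e] .
  then have cont: "continuous_on {0..l e} (\<lambda>x. massflux (a e) (rho e t x) (w e t x))"
    by (rule H1_on_continuous_on)
  have "AE x in lebesgue_on {0..l e}.
      massflux (a e) (rho e t x) (w e t x) \<in> {- (ahi * rhi * wbar)..ahi * rhi * wbar}"
    using classical_network_solution_AE_bounds[OF sol t e]
  proof eventually_elim
    case (elim x)
    then have "\<bar>massflux (a e) (rho e t x) (w e t x)\<bar> \<le> ahi * rhi * wbar"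
      using assms(3-5) by (intro abs_massflux_le) auto
    then show ?case by auto
  qed
  moreover have "0 < l e"
    using graph e by (simp add: network_graph_def)
  ultimately have "massflux (a e) (rho e t x) (w e t x) \<in> {- (ahi * rhi * wbar)..ahi * rhi * wbar}"
    using continuous_on_AE_mem_closed[OF _ cont closed_atLeastAtMost _ x] by blast
  then show ?thesis by auto
qed

lemma classical_network_solution_abs_velocity_le:
  assumes sol: "classical_network_solution V E src tgt l a z g P eps gam hb rlo rhi wbar T rho w"
    and graph: "network_graph V E src tgt l"
    and lip: "L-lipschitz_on ({0..T} \<times> {0..l e}) (\<lambda>(t, x). w e t x)"
    and t: "t \<in> {0..T}" and e: "e \<in> E" and x: "x \<in> {0..l e}"
  shows "\<bar>w e t x\<bar> \<le> wbar"
proof -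
  have "AE x in lebesgue_on {0..l e}. w e t x \<in> {- wbar..wbar}"
    using classical_network_solution_AE_bounds[OF sol t e] by eventually_elim auto
  moreover have "0 < l e"
    using graph e by (simp add: network_graph_def)
  ultimately have "w e t x \<in> {- wbar..wbar}"
    using continuous_on_AE_mem_closed[OF _ lipschitz_on_slice_continuous_on[OF lip t]
        closed_atLeastAtMost _ x] by blast
  then show ?thesis by auto
qed

lemma vertex_cases:
  assumes "finite E" and "v \<in> V"
  obtains (inner) "v \<in> inner_vertices V E src tgt"
    | (boundary) e where "v \<in> boundary_vertices V E src tgt" and "edges_at E src tgt v = {e}"
    | (isolated) "edges_at E src tgt v = {}"
proof -
  have "finite (edges_at E src tgt v)"
    using assms(1) by (simp add: edges_at_def)
  consider "card (edges_at E src tgt v) > 1" | "card (edges_at E src tgt v) = 1"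
    | "card (edges_at E src tgt v) = 0"
    by linarith
  then show thesis
  proof cases
    case 1
    then show thesis
      using inner assms(2) by (simp add: inner_vertices_def)
  next
    case 2
    then obtain e where "edges_at E src tgt v = {e}"
      by (rule card_1_singletonE)
    then show thesis
      using boundary assms(2) 2 by (simp add: boundary_vertices_def)
  next
    case 3
    then show thesis
      using isolated \<open>finite (edges_at E src tgt v)\<close> by simp
  qed
qed

lemma junction_sum_eq_0:
  fixes H H' M M' n :: "'e \<Rightarrow> real"
  assumes "\<forall>e\<in>A. H e = h" and "\<forall>e\<in>A. H' e = h'"
    and "(\<Sum>e\<in>A. M e * n e) = 0" and "(\<Sum>e\<in>A. M' e * n e) = 0"
  shows "(\<Sum>e\<in>A. (H e - H' e) * (M e - M' e) * n e) = 0"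
proof -
  have "(\<Sum>e\<in>A. (H e - H' e) * (M e - M' e) * n e)
      = (\<Sum>e\<in>A. (h - h') * (M e * n e) - (h - h') * (M' e * n e))"
    using assms(1,2) by (intro sum.cong) (auto simp: algebra_simps)
  also have "\<dots> = (h - h') * (\<Sum>e\<in>A. M e * n e) - (h - h') * (\<Sum>e\<in>A. M' e * n e)"
    by (simp add: sum_subtractf sum_distrib_left)
  finally show ?thesis
    using assms(3,4) by simp
qed

lemma vertex_coupling_le:
  fixes E :: "'e set" and src tgt :: "'e \<Rightarrow> 'v" and v :: 'v and H H' M M' :: "'e \<Rightarrow> real"
  defines "A \<equiv> edges_at E src tgt v"
  assumes "finite E" and "v \<in> V"
    and inner_flux: "v \<in> inner_vertices V E src tgt \<Longrightarrow> (\<Sum>e\<in>A. M e * nsign src tgt v e) = 0"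
      "v \<in> inner_vertices V E src tgt \<Longrightarrow> (\<Sum>e\<in>A. M' e * nsign src tgt v e) = 0"
    and inner_enthalpy: "v \<in> inner_vertices V E src tgt \<Longrightarrow> \<exists>h. \<forall>e\<in>A. H e = h"
      "v \<in> inner_vertices V E src tgt \<Longrightarrow> \<exists>h'. \<forall>e\<in>A. H' e = h'"
    and boundary_enthalpy: "\<And>e. v \<in> boundary_vertices V E src tgt \<Longrightarrow> e \<in> A \<Longrightarrow> H e = hb"
      "\<And>e. v \<in> boundary_vertices V E src tgt \<Longrightarrow> e \<in> A \<Longrightarrow> H' e = hb'"
    and boundary_data: "v \<in> boundary_vertices V E src tgt \<Longrightarrow> \<bar>hb - hb'\<bar> \<le> S"
    and flux_bound: "\<And>e. e \<in> A \<Longrightarrow> \<bar>M e - M' e\<bar> \<le> K" and "0 \<le> K" and "0 \<le> S"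
  shows "- (\<Sum>e\<in>A. (H e - H' e) * (M e - M' e) * nsign src tgt v e) \<le> K * S"
  using assms(2,3)
proof (cases rule: vertex_cases[where src = src and tgt = tgt])
  case inner
  then obtain h h' where "\<forall>e\<in>A. H e = h" and "\<forall>e\<in>A. H' e = h'"
    using inner_enthalpy by blast
  then have "(\<Sum>e\<in>A. (H e - H' e) * (M e - M' e) * nsign src tgt v e) = 0"
    using inner inner_flux by (intro junction_sum_eq_0)
  then show ?thesis
    using \<open>0 \<le> K\<close> \<open>0 \<le> S\<close> by simp
next
  case (boundary e)
  then have e: "e \<in> A" and A: "A = {e}"
    by (simp_all add: A_def)
  have "H e = hb" and "H' e = hb'"
    using boundary(1) e by (rule boundary_enthalpy)+
  then have "- ((H e - H' e) * (M e - M' e) * nsign src tgt v e)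
      \<le> \<bar>hb - hb'\<bar> * \<bar>M e - M' e\<bar> * \<bar>nsign src tgt v e\<bar>"
    by (simp only: abs_mult[symmetric] abs_ge_minus_self)
  also have "\<dots> \<le> S * K * 1"
    using boundary_data[OF boundary(1)] flux_bound[OF e] \<open>0 \<le> S\<close>
    by (intro mult_mono) (auto simp: abs_nsign_le_1)
  finally show ?thesis
    by (simp add: A mult.commute)
next
  case isolated
  then show ?thesis
    using \<open>0 \<le> K\<close> \<open>0 \<le> S\<close> by (simp add: A_def)
qed

lemma coupling_sum_perturb_le:
  fixes H H' H'' M M' n \<delta> :: "'e \<Rightarrow> real" and B K D :: real
  assumes "- (\<Sum>e\<in>A. (H e - H' e) * (M e - M' e) * n e) \<le> B"
    and "\<And>e. e \<in> A \<Longrightarrow> \<bar>M e - M' e\<bar> \<le> K" and "\<And>e. e \<in> A \<Longrightarrow> \<bar>n e\<bar> \<le> 1"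
    and "\<And>e. e \<in> A \<Longrightarrow> \<bar>\<delta> e\<bar> \<le> D" and "\<And>e. e \<in> A \<Longrightarrow> H'' e = H' e + \<delta> e"
  shows "- (\<Sum>e\<in>A. (H e - H'' e) * (M e - M' e) * n e) \<le> B + card A * (K * D)"
proof -
  have "\<delta> e * (M e - M' e) * n e \<le> K * D" if "e \<in> A" for e
  proof -
    have "\<bar>\<delta> e * (M e - M' e) * n e\<bar> \<le> D * K * 1"
      unfolding abs_mult using assms(2-4)[OF that] by (intro mult_mono) auto
    then show ?thesis
      by (simp add: mult.commute abs_le_iff)
  qed
  then have "(\<Sum>e\<in>A. \<delta> e * (M e - M' e) * n e) \<le> card A * (K * D)"
    by (rule sum_bounded_above)
  moreover have "(\<Sum>e\<in>A. (H e - H'' e) * (M e - M' e) * n e)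
      = (\<Sum>e\<in>A. (H e - H' e) * (M e - M' e) * n e) - (\<Sum>e\<in>A. \<delta> e * (M e - M' e) * n e)"
    using assms(5) by (simp add: sum_subtractf[symmetric] algebra_simps)
  ultimately show ?thesis
    using assms(1) by linarith
qed

lemma vertex_coupling_estimate:
  fixes V :: "'v set" and E :: "'e set" and ahi rhi wbar :: real
  assumes graph: "network_graph V E src tgt l"
    and a: "\<forall>e\<in>E. 0 \<le> a e \<and> a e \<le> ahi" and "0 \<le> ahi"
    and "0 \<le> rlo" and "rlo \<le> rhi" and "0 \<le> wbar"
    and sol: "classical_network_solution V E src tgt l a z g P eps gam hb rlo rhi wbar T rho w"
    and sol': "classical_network_solution V E src tgt l a z g P eps' gam' hb' rlo rhi wbar T rho' w'"
    and lip: "\<forall>e\<in>E. L-lipschitz_on ({0..T} \<times> {0..l e}) (\<lambda>(t, x). w' e t x)"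
    and t: "t \<in> {0..T}" and v: "v \<in> V"
  shows "- (\<Sum>e\<in>edges_at E src tgt v.
        (enthalpy eps P g (z e (vpos tgt l v e)) (rho e t (vpos tgt l v e)) (w e t (vpos tgt l v e))
         - enthalpy eps P g (z e (vpos tgt l v e)) (rho' e t (vpos tgt l v e)) (w' e t (vpos tgt l v e)))
        * (massflux (a e) (rho e t (vpos tgt l v e)) (w e t (vpos tgt l v e))
           - massflux (a e) (rho' e t (vpos tgt l v e)) (w' e t (vpos tgt l v e)))
        * nsign src tgt v e)
     \<le> 2 * (ahi * rhi * wbar) * sqrt (\<Sum>u\<in>boundary_vertices V E src tgt. (hb u - hb' u)\<^sup>2)
       + card E * (ahi * rhi * wbar * wbar\<^sup>2 * \<bar>eps\<^sup>2 - eps'\<^sup>2\<bar>)"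
    (is "?lhs \<le> 2 * ?K * ?S + _")
proof -
  have "finite V" "finite E"
    using network_graph_finite[OF graph] by auto
  let ?A = "edges_at E src tgt v"
  have edges: "?A \<subseteq> E"
    by (auto simp: edges_at_def)
  have x: "vpos tgt l v e \<in> {0..l e}" if "e \<in> ?A" for e
    using vpos_mem_edge[OF graph] edges that by blast
  have flux: "\<bar>massflux (a e) (rho e t (vpos tgt l v e)) (w e t (vpos tgt l v e))
      - massflux (a e) (rho' e t (vpos tgt l v e)) (w' e t (vpos tgt l v e))\<bar> \<le> 2 * ?K"
    if "e \<in> ?A" for e
  proof -
    have "e \<in> E" and "0 \<le> a e" and "a e \<le> ahi"
      using a edges that by auto
    then have "\<bar>massflux (a e) (rho e t (vpos tgt l v e)) (w e t (vpos tgt l v e))\<bar> \<le> ?K"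
      and "\<bar>massflux (a e) (rho' e t (vpos tgt l v e)) (w' e t (vpos tgt l v e))\<bar> \<le> ?K"
      using classical_network_solution_abs_massflux_le[OF sol graph _ _ \<open>0 \<le> rlo\<close> t _ x[OF that]]
        classical_network_solution_abs_massflux_le[OF sol' graph _ _ \<open>0 \<le> rlo\<close> t _ x[OF that]]
      by simp_all
    then show ?thesis
      by linarith
  qed
  have perturbation: "\<bar>(eps\<^sup>2 - eps'\<^sup>2) * (w' e t (vpos tgt l v e))\<^sup>2 / 2\<bar> \<le> \<bar>eps\<^sup>2 - eps'\<^sup>2\<bar> * wbar\<^sup>2 / 2"
    if "e \<in> ?A" for e
    using classical_network_solution_abs_velocity_le[OF sol' graph _ t _ x[OF that]] lip edges that
    by (intro abs_enthalpy_shift_le) blast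
  have "finite (boundary_vertices V E src tgt)"
    using \<open>finite V\<close> by (simp add: boundary_vertices_def)
  then have data: "\<bar>hb v - hb' v\<bar> \<le> ?S" if "v \<in> boundary_vertices V E src tgt"
    using that by (rule abs_le_sqrt_sum_squares)
  have "- (\<Sum>e\<in>?A.
        (enthalpy eps P g (z e (vpos tgt l v e)) (rho e t (vpos tgt l v e)) (w e t (vpos tgt l v e))
         - enthalpy eps' P g (z e (vpos tgt l v e)) (rho' e t (vpos tgt l v e)) (w' e t (vpos tgt l v e)))
        * (massflux (a e) (rho e t (vpos tgt l v e)) (w e t (vpos tgt l v e))
           - massflux (a e) (rho' e t (vpos tgt l v e)) (w' e t (vpos tgt l v e)))
        * nsign src tgt v e) \<le> 2 * ?K * ?S"
    using classical_network_solution_inner_vertex[OF sol t] classical_network_solution_inner_vertex[OF sol' t]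
      classical_network_solution_boundary_vertex[OF sol t] classical_network_solution_boundary_vertex[OF sol' t]
      data flux assms(3-6)
    by (intro vertex_coupling_le[OF \<open>finite E\<close> v]) (auto intro: sum_nonneg)
  then have "?lhs \<le> 2 * ?K * ?S + card ?A * (2 * ?K * (\<bar>eps\<^sup>2 - eps'\<^sup>2\<bar> * wbar\<^sup>2 / 2))"
    by (rule coupling_sum_perturb_le[OF _ flux abs_nsign_le_1 perturbation enthalpy_change_eps])
  also have "\<dots> = 2 * ?K * ?S + card ?A * (?K * wbar\<^sup>2 * \<bar>eps\<^sup>2 - eps'\<^sup>2\<bar>)"
    by simp
  also have "\<dots> \<le> 2 * ?K * ?S + card E * (?K * wbar\<^sup>2 * \<bar>eps\<^sup>2 - eps'\<^sup>2\<bar>)"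
    using card_mono[OF \<open>finite E\<close> edges] assms(3-6) by (intro add_left_mono mult_right_mono) auto
  finally show ?thesis .
qed

lemma coupling_term_estimate:
  fixes V :: "'v set" and E :: "'e set" and ahi rhi wbar :: real
  assumes graph: "network_graph V E src tgt l"
    and "\<forall>e\<in>E. 0 \<le> a e \<and> a e \<le> ahi" and "0 \<le> ahi"
    and "0 \<le> rlo" and "rlo \<le> rhi" and "0 \<le> wbar"
    and "classical_network_solution V E src tgt l a z g P eps gam hb rlo rhi wbar T rho w"
    and "classical_network_solution V E src tgt l a z g P eps' gam' hb' rlo rhi wbar T rho' w'"
    and "\<forall>e\<in>E. L-lipschitz_on ({0..T} \<times> {0..l e}) (\<lambda>(t, x). w' e t x)"
    and "t \<in> {0..T}"
  shows "- (\<Sum>v\<in>V. \<Sum>e\<in>edges_at E src tgt v.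
        (enthalpy eps P g (z e (vpos tgt l v e)) (rho e t (vpos tgt l v e)) (w e t (vpos tgt l v e))
         - enthalpy eps P g (z e (vpos tgt l v e)) (rho' e t (vpos tgt l v e)) (w' e t (vpos tgt l v e)))
        * (massflux (a e) (rho e t (vpos tgt l v e)) (w e t (vpos tgt l v e))
           - massflux (a e) (rho' e t (vpos tgt l v e)) (w' e t (vpos tgt l v e)))
        * nsign src tgt v e)
     \<le> card V * (2 * (ahi * rhi * wbar) + card E * (ahi * rhi * wbar * wbar\<^sup>2))
       * (sqrt (\<Sum>u\<in>boundary_vertices V E src tgt. (hb u - hb' u)\<^sup>2) + \<bar>eps\<^sup>2 - eps'\<^sup>2\<bar>)"
    (is "- (\<Sum>v\<in>V. ?term v) \<le> real (card V) * (2 * ?K + real (card E) * ?X) * (?S + ?D)")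
proof -
  have "- (\<Sum>v\<in>V. ?term v) = (\<Sum>v\<in>V. - ?term v)"
    by (simp add: sum_negf)
  also have "\<dots> \<le> (\<Sum>v\<in>V. 2 * ?K * ?S + card E * (?X * ?D))"
    using assms by (intro sum_mono vertex_coupling_estimate) auto
  also have "\<dots> = card V * (2 * ?K * ?S + card E * ?X * ?D)"
    by simp
  also have "\<dots> \<le> card V * ((2 * ?K + card E * ?X) * (?S + ?D))"
  proof (intro mult_left_mono)
    have "0 \<le> ?K" and "0 \<le> ?X" and "0 \<le> ?S"
      using assms(3-6) by (simp_all add: sum_nonneg)
    then have "0 \<le> 2 * ?K * ?D + card E * ?X * ?S"
      by simp
    then show "2 * ?K * ?S + card E * ?X * ?D \<le> (2 * ?K + card E * ?X) * (?S + ?D)"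
      by (simp add: algebra_simps)
  qed simp
  finally show ?thesis
    by simp
qed

theorem lemma5p1:
  fixes V :: "'v set" and E :: "'e set" and src tgt :: "'e \<Rightarrow> 'v" and l :: "'e \<Rightarrow> real"
    and P :: "real \<Rightarrow> real" and g :: real
    and rlo rhi wbar epsbar alo ahi gbar zbar gamlo gamhi Lip :: real
  assumes graph: "network_graph V E src tgt l"
    and P: "smooth_strictly_convex P"
    and A1: "0 < rlo" "rlo \<le> rhi" "0 < wbar" "0 < epsbar"
      "\<forall>r\<in>{rlo..rhi}. r * (deriv ^^ 2) P r \<ge> 4 * epsbar\<^sup>2 * wbar\<^sup>2"
      "0 < alo" "alo \<le> ahi" "0 < gbar" "0 < zbar"
    and A2: "0 < gamlo" "gamlo \<le> gamhi"
    and Lip: "0 \<le> Lip"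
  shows "\<exists>C. \<forall>a z gam gam' eps eps' hb hb' T rho w rho' w'.
     (\<forall>e\<in>E. alo \<le> a e \<and> a e \<le> ahi \<and> (\<forall>x\<in>{0..l e}. \<bar>g * z e x\<bar> \<le> gbar * zbar) \<and>
            gamlo \<le> gam e \<and> gam e \<le> gamhi \<and> gamlo \<le> gam' e \<and> gam' e \<le> gamhi) \<and>
     0 \<le> eps \<and> eps \<le> epsbar \<and> 0 \<le> eps' \<and> eps' \<le> epsbar \<and> 0 \<le> T \<and>
     classical_network_solution V E src tgt l a z g P eps gam hb rlo rhi wbar T rho w \<and>
     classical_network_solution V E src tgt l a z g P eps' gam' hb' rlo rhi wbar T rho' w' \<and>
     (\<forall>e\<in>E. Lip-lipschitz_on ({0..T} \<times> {0..l e}) (\<lambda>(t, x). rho' e t x) \<and>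
            Lip-lipschitz_on ({0..T} \<times> {0..l e}) (\<lambda>(t, x). w' e t x))
     \<longrightarrow> (\<forall>t\<in>{0..T}.
          - (\<Sum>v\<in>V. \<Sum>e\<in>edges_at E src tgt v.
               (enthalpy eps P g (z e (vpos tgt l v e)) (rho e t (vpos tgt l v e)) (w e t (vpos tgt l v e))
                - enthalpy eps P g (z e (vpos tgt l v e)) (rho' e t (vpos tgt l v e)) (w' e t (vpos tgt l v e)))
             * (massflux (a e) (rho e t (vpos tgt l v e)) (w e t (vpos tgt l v e))
                - massflux (a e) (rho' e t (vpos tgt l v e)) (w' e t (vpos tgt l v e)))
             * nsign src tgt v e)
          \<le> C * (sqrt (\<Sum>v\<in>boundary_vertices V E src tgt. (hb v - hb' v)\<^sup>2) + \<bar>eps\<^sup>2 - eps'\<^sup>2\<bar>))"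
proof (rule exI[of _ "real (card V) * (2 * (ahi * rhi * wbar) + card E * (ahi * rhi * wbar * wbar\<^sup>2))"],
    intro allI impI ballI, elim conjE, goal_cases)
  case (1 a z gam gam' eps eps' hb hb' T rho w rho' w' t)
  (* The condition on P, the elevation and friction bounds and the value of Lip are not needed:
     the constant depends only on ahi, rhi, wbar and the size of the graph, and of the Lipschitz
     hypothesis only the resulting continuity of w' is used. *)
  then show ?case
    using A1 by (intro coupling_term_estimate[OF graph]) auto
qed

end
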